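(* Let $t\ge 0$ and $p_0\in\operatorname{dom}V$. Then the direction $d(p_0;t,b)$ is the unique solution of the cone projection problem \[ \min_{d\in\mathbb{R}^m}\|d+(b+tp_0)\|_2^2\quad\text{subject to}\quad D_{\mathcal E(p_0)}(p_0)A_{\mathcal E(p_0)}^\top d\ge 0 . \] Moreover, if $\hat u\in\mathbb{R}^n$ is a solution of the nonnegative least-squares problem \[ \min_{u\in\mathbb{R}^n}\|A D(p_0)u-(b+tp_0)\|_2^2\quad\text{subject to}\quad u_{\mathcal E(p_0)}\ge 0,\ u_{\mathcal E^{\mathsf C}(p_0)}=0, \] then $d(p_0;t,b)=A_{\mathcal E(p_0)}D_{\mathcal E(p_0)}(p_0)\hat u_{\mathcal E(p_0)}-(b+tp_0)$, and \[ \hat u_j\,[D(p_0)A^\top d(p_0;t,b)]_j=0\ \text{ for every } j\in\{1,\dots,n\},\qquad \|d(p_0;t,b)\|_2^2+\langle b+tp_0,d(p_0;t,b)\rangle=0 . \]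
   Context: Standing setting: $m\le n$ are positive integers, $A\in\mathbb{R}^{m\times n}$ has rank $m$, and $b\in\mathbb{R}^m\setminus\{0\}$; $e_j$ is the $j$-th standard basis vector of $\mathbb{R}^n$. For $t\ge0$ define $V(p;t,b)=\frac t2\|p\|_2^2+\langle p,b\rangle+\chi(-A^\top p)$, where $\chi(s)=0$ if $\|s\|_\infty\le 1$ and $\chi(s)=+\infty$ otherwise; $\operatorname{dom}V=\{p\in\mathbb{R}^m:\|A^\top p\|_\infty\le 1\}$. For $p\in\mathbb{R}^m$, the equicorrelation set is $\mathcal E(p)=\{j:|\langle A^\top p,e_j\rangle|=1\}$, $\mathcal E^{\mathsf C}(p)$ is its complement in $\{1,\dots,n\}$, and $D(p)=\operatorname{diag}(\operatorname{sgn}(-A^\top p))$ (with $\operatorname{sgn}(0)=0$). For an index set $\mathcal E$, $A_{\mathcal E}$ is the submatrix of $A$ with columns indexed by $\mathcal E$, $D_{\mathcal E}(p)$ is the principal submatrix of $D(p)$ with rows and columns indexed by $\mathcal E$, and $u_{\mathcal E}$ is the subvector of $u$ indexed by $\mathcal E$; vector inequalities are componentwise. For $p\in\operatorname{dom}V$, the subdifferential of $V(\cdot;t,b)$ at $p$ is the nonempty closed convex set $\partial_pV(p;t,b)=\{tp+b-\sum_{j\in\mathcal E(p)}u_jAD(p)e_j:\ u_j\ge0\}$, and $d(p;t,b):=-\operatorname{proj}_{\partial_pV(p;t,b)}(0)$, i.e. minus the element of $\partial_pV(p;t,b)$ of smallest Euclidean norm. *)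

theory Defs
  imports "HOL-Analysis.Analysis"
begin

definition indic_inf :: "real^'n \<Rightarrow> ereal" where
  "indic_inf s = (if (\<forall>j. \<bar>s$j\<bar> \<le> 1) then 0 else \<infinity>)"

definition Vfun :: "real^'n^'m \<Rightarrow> real^'m \<Rightarrow> real \<Rightarrow> real^'m \<Rightarrow> ereal" where
  "Vfun A p t b = ereal (t/2 * (norm p)^2 + inner p b) + indic_inf (- (transpose A *v p))"

definition domV :: "real^'n^'m \<Rightarrow> (real^'m) set" where
  "domV A = {p. \<forall>j. \<bar>(transpose A *v p)$j\<bar> \<le> 1}"

definition equicorr :: "real^'n^'m \<Rightarrow> real^'m \<Rightarrow> 'n set" where
  "equicorr A p = {j. \<bar>(transpose A *v p)$j\<bar> = 1}"

definition Dmat :: "real^'n^'m \<Rightarrow> real^'m \<Rightarrow> real^'n^'n" where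
  "Dmat A p = (\<chi> i j. if i = j then sgn (- (transpose A *v p)$i) else 0)"

definition subdiffV :: "real^'n^'m \<Rightarrow> real^'m \<Rightarrow> real \<Rightarrow> real^'m \<Rightarrow> (real^'m) set" where
  "subdiffV A p t b = {t *\<^sub>R p + b - (\<Sum>j\<in>equicorr A p. u j *\<^sub>R (A *v (Dmat A p *v axis j 1))) | u.
       \<forall>j\<in>equicorr A p. u j \<ge> 0}"

definition dir :: "real^'n^'m \<Rightarrow> real^'m \<Rightarrow> real \<Rightarrow> real^'m \<Rightarrow> real^'m" where
  "dir A p t b = - closest_point (subdiffV A p t b) 0"

end

theory Submission imports Defs begin

(* With c = b + t p0 and K the convex cone generated by the signed equicorrelated columns
   a_j = A D(p0) e_j (j in E(p0)), the subdifferential is c - K, so d(p0;t,b) = k - c for the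
   projection k of c onto the closed cone K. Testing the variational inequality of this
   projection at 0 and 2k gives <c - k, k> = 0 and <c - k, x> <= 0 on K (Moreau's decomposition).
   The feasible set of the cone projection problem is the dual cone of K, and on it
   ||d + c||^2 = ||d - (k - c)||^2 + 2 <d, k> + ||k||^2, so k - c is its unique solution.
   The NNLS problem is the projection of c onto K in coordinates, so a solution u maps to k;
   then sum_j u_j <a_j, d> = <k, k - c> = 0 is a sum of nonnegative terms, which gives
   complementary slackness, and ||d||^2 + <c, d> = <k, k - c> = 0. *)

section \<open>Projection onto a closed convex cone\<close>

lemma closest_point_reflection:
  fixes K :: "'a::euclidean_space set"
  assumes "convex K" "closed K" "K \<noteq> {}"
  shows "closest_point ((\<lambda>x. c - x) ` K) 0 = c - closest_point K c"
proof -
  have reflection: "(\<lambda>x. c - x) ` K = (+) c ` ((\<lambda>x. - x) ` K)"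
    by (auto simp: image_image)
  show ?thesis
  proof (rule closest_point_unique[symmetric])
    show "convex ((\<lambda>x. c - x) ` K)"
      unfolding reflection by (intro convex_translation convex_negations assms(1))
    show "closed ((\<lambda>x. c - x) ` K)"
      unfolding reflection by (intro closed_translation closed_negations assms(2))
    show "c - closest_point K c \<in> (\<lambda>x. c - x) ` K"
      using closest_point_in_set[OF assms(2,3)] by blast
    show "\<forall>z\<in>(\<lambda>x. c - x) ` K. dist 0 (c - closest_point K c) \<le> dist 0 z"
      using closest_point_le[OF assms(2)] by (auto simp: dist_norm norm_minus_commute)
  qed
qed

lemma closest_point_convex_cone_polar:
  fixes K :: "'a::euclidean_space set"
  assumes "convex_cone K" "closed K"
  shows "inner (c - closest_point K c) (closest_point K c) = 0"
    and "x \<in> K \<Longrightarrow> inner (c - closest_point K c) x \<le> 0"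
proof -
  let ?k = "closest_point K c"
  have convex: "convex K"
    using assms(1) by (simp add: convex_cone_def)
  have "?k \<in> K"
    using closest_point_in_set[OF assms(2) convex_cone_nonempty[OF assms(1)]] .
  have variational: "inner (c - ?k) y \<le> inner (c - ?k) ?k" if "y \<in> K" for y
    using closest_point_dot[OF convex assms(2) that, of c] by (simp add: inner_diff_right)
  have "inner (c - ?k) ?k \<ge> 0"
    using variational[OF convex_cone_contains_0[OF assms(1)]] by simp
  moreover have "inner (c - ?k) (2 *\<^sub>R ?k) \<le> inner (c - ?k) ?k"
    using variational[OF convex_cone_scaleR[OF assms(1) _ \<open>?k \<in> K\<close>, of 2]] by simp
  ultimately show orthogonal: "inner (c - ?k) ?k = 0"
    by simp
  show "x \<in> K \<Longrightarrow> inner (c - ?k) x \<le> 0"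
    using variational orthogonal by fastforce
qed

lemma dual_cone_projection:
  fixes K :: "'a::euclidean_space set"
  assumes "convex_cone K" "closed K"
  defines "D \<equiv> {d. \<forall>x\<in>K. 0 \<le> inner x d}"
  shows "d \<in> D \<and> (\<forall>d'\<in>D. (norm (d + c))\<^sup>2 \<le> (norm (d' + c))\<^sup>2) \<longleftrightarrow> d = closest_point K c - c"
proof -
  let ?k = "closest_point K c"
  have "?k \<in> K"
    using closest_point_in_set[OF assms(2) convex_cone_nonempty[OF assms(1)]] .
  have feasible: "?k - c \<in> D"
  proof -
    have "inner x (?k - c) = - inner (c - ?k) x" for x
      by (metis inner_commute inner_minus_left minus_diff_eq)
    then show ?thesis
      using closest_point_convex_cone_polar(2)[OF assms(1,2)] by (simp add: D_def)
  qed
  have expansion: "(norm (d + c))\<^sup>2 = (norm (d - (?k - c)))\<^sup>2 + 2 * inner d ?k + (norm ?k)\<^sup>2" for d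
  proof -
    have "d + c = (d - (?k - c)) + ?k"
      by simp
    then have "(norm (d + c))\<^sup>2 = (norm (d - (?k - c)))\<^sup>2 + 2 * inner (d - (?k - c)) ?k + (norm ?k)\<^sup>2"
      by (simp only: power2_norm_eq_inner inner_add_left inner_add_right inner_commute[of ?k "d - (?k - c)"])
    moreover have "inner (?k - c) ?k = 0"
      using closest_point_convex_cone_polar(1)[OF assms(1,2)] by (simp add: inner_diff_left)
    ultimately show ?thesis
      by (simp add: inner_diff_left)
  qed
  have nonneg: "inner d ?k \<ge> 0" if "d \<in> D" for d
    using that \<open>?k \<in> K\<close> by (auto simp: D_def inner_commute[of d])
  show ?thesis
  proof
    assume d: "d \<in> D \<and> (\<forall>d'\<in>D. (norm (d + c))\<^sup>2 \<le> (norm (d' + c))\<^sup>2)"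
    then have "(norm (d + c))\<^sup>2 \<le> (norm ?k)\<^sup>2"
      using feasible by fastforce
    then have "(norm (d - (?k - c)))\<^sup>2 \<le> 0"
      using expansion[of d] nonneg[of d] d by linarith
    then show "d = ?k - c"
      by simp
  next
    assume "d = ?k - c"
    moreover have "(norm (?k - c + c))\<^sup>2 \<le> (norm (d' + c))\<^sup>2" if "d' \<in> D" for d'
      using expansion[of d'] nonneg[OF that] by simp
    ultimately show "d \<in> D \<and> (\<forall>d'\<in>D. (norm (d + c))\<^sup>2 \<le> (norm (d' + c))\<^sup>2)"
      using feasible by blast
  qed
qed

section \<open>Finitely generated cones\<close>

lemma convex_cone_hull_finite_image:
  fixes a :: "'i \<Rightarrow> 'a::real_vector"
  assumes "finite E"
  shows "convex_cone hull (a ` E) = {\<Sum>j\<in>E. u j *\<^sub>R a j | u. \<forall>j\<in>E. 0 \<le> u j}"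
    (is "_ = ?C")
proof
  have "convex_cone ?C"
    unfolding convex_cone_iff
  proof (intro conjI ballI allI impI)
    show "0 \<in> ?C"
      by (auto intro!: exI[of _ "\<lambda>_. 0"])
  next
    fix x y assume "x \<in> ?C" "y \<in> ?C"
    then obtain u v where "x = (\<Sum>j\<in>E. u j *\<^sub>R a j)" "\<forall>j\<in>E. 0 \<le> u j"
      and "y = (\<Sum>j\<in>E. v j *\<^sub>R a j)" "\<forall>j\<in>E. 0 \<le> v j"
      by blast
    then show "x + y \<in> ?C"
      by (auto intro!: exI[of _ "\<lambda>j. u j + v j"] simp: sum.distrib scaleR_add_left)
  next
    fix x and r :: real assume "x \<in> ?C" "0 \<le> r"
    then obtain u where "x = (\<Sum>j\<in>E. u j *\<^sub>R a j)" "\<forall>j\<in>E. 0 \<le> u j"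
      by blast
    with \<open>0 \<le> r\<close> show "r *\<^sub>R x \<in> ?C"
      by (auto intro!: exI[of _ "\<lambda>j. r * u j"] simp: scaleR_sum_right)
  qed
  moreover have "a ` E \<subseteq> ?C"
  proof (rule image_subsetI)
    fix i assume "i \<in> E"
    have "(\<Sum>j\<in>E. (if j = i then 1 else 0) *\<^sub>R a j) = (\<Sum>j\<in>E. if j = i then a j else 0)"
      by (rule sum.cong) auto
    also have "\<dots> = a i"
      using assms \<open>i \<in> E\<close> by simp
    finally have "a i = (\<Sum>j\<in>E. (if j = i then 1 else 0) *\<^sub>R a j)" ..
    then show "a i \<in> ?C"
      by (intro CollectI exI[of _ "\<lambda>j. if j = i then 1 else 0"] conjI) simp_all
  qed
  ultimately show "convex_cone hull (a ` E) \<subseteq> ?C"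
    by (rule hull_minimal[rotated])
next
  have "(\<Sum>j\<in>F. u j *\<^sub>R a j) \<in> convex_cone hull (a ` E)"
    if "finite F" "F \<subseteq> E" "\<forall>j\<in>E. 0 \<le> u j" for F u
    using that
  proof (induction F rule: finite_induct)
    case empty
    then show ?case
      by (simp add: convex_cone_hull_contains_0)
  next
    case (insert i F)
    then have "u i *\<^sub>R a i \<in> convex_cone hull (a ` E)"
      by (simp add: convex_cone_hull_mul hull_inc)
    with insert show ?case
      by (simp add: convex_cone_hull_add)
  qed
  then show "?C \<subseteq> convex_cone hull (a ` E)"
    using assms by blast
qed

lemma convex_cone_hull_dual:
  fixes S :: "'a::real_inner set"
  shows "(\<forall>x\<in>convex_cone hull S. 0 \<le> inner x d) \<longleftrightarrow> (\<forall>x\<in>S. 0 \<le> inner x d)"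
proof
  assume "\<forall>x\<in>S. 0 \<le> inner x d"
  then have "convex_cone hull S \<subseteq> {x. inner d x \<ge> 0}"
    by (intro hull_minimal convex_cone_halfspace_ge) (auto simp: inner_commute)
  then show "\<forall>x\<in>convex_cone hull S. 0 \<le> inner x d"
    by (auto simp: inner_commute)
qed (auto intro: hull_inc)

lemma closest_point_convex_cone_hull_complementary:
  fixes a :: "'i \<Rightarrow> 'a::euclidean_space" and E :: "'i set" and c :: 'a
  defines "k \<equiv> closest_point (convex_cone hull (a ` E)) c"
  assumes "finite E" "k = (\<Sum>j\<in>E. u j *\<^sub>R a j)" "\<forall>j\<in>E. 0 \<le> u j" "i \<in> E"
  shows "u i * inner (a i) (k - c) = 0"
proof -
  have cone: "convex_cone (convex_cone hull (a ` E))" "closed (convex_cone hull (a ` E))"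
    using assms(2) by (simp_all add: convex_cone_convex_cone_hull closed_convex_cone_hull)
  have terms_nonneg: "0 \<le> u j * inner (a j) (k - c)" if "j \<in> E" for j
  proof -
    have "a j \<in> convex_cone hull (a ` E)"
      using that by (intro hull_inc imageI)
    then have "inner (c - k) (a j) \<le> 0"
      unfolding k_def by (rule closest_point_convex_cone_polar(2)[OF cone])
    moreover have "inner (a j) (k - c) = - inner (c - k) (a j)"
      by (metis inner_commute inner_minus_left minus_diff_eq)
    ultimately have "0 \<le> inner (a j) (k - c)"
      by simp
    then show ?thesis
      using assms(4) that by simp
  qed
  have "(\<Sum>j\<in>E. u j * inner (a j) (k - c)) = inner k (k - c)"
    unfolding assms(3) by (simp add: inner_sum_left)
  also have "\<dots> = - inner (c - k) k"
    by (metis inner_commute inner_minus_left minus_diff_eq)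
  also have "\<dots> = 0"
    using closest_point_convex_cone_polar(1)[OF cone, of c] unfolding k_def by simp
  finally have "(\<Sum>j\<in>E. u j * inner (a j) (k - c)) = 0" .
  then have "\<forall>j\<in>E. u j * inner (a j) (k - c) = 0"
    by (subst (asm) sum_nonneg_eq_0_iff[OF assms(2)]) (use terms_nonneg in auto)
  then show ?thesis
    using assms(5) by blast
qed

section \<open>The cone generated by the equicorrelated columns\<close>

definition equicorr_cone :: "real^'n^'m \<Rightarrow> real^'m \<Rightarrow> (real^'m) set" where
  "equicorr_cone A p = convex_cone hull ((\<lambda>j. A *v (Dmat A p *v axis j 1)) ` equicorr A p)"

lemma matrix_vector_mult_axis: "(A::real^'n^'m) *v axis j s = s *\<^sub>R column j A"
proof -
  have "(A *v axis j s) $ k = (\<Sum>i\<in>UNIV. if i = j then A $ k $ j * s else 0)" for k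
    unfolding matrix_vector_mult_def axis_def vec_lambda_beta by (intro sum.cong) auto
  then show ?thesis
    by (simp add: vec_eq_iff column_def mult.commute)
qed

lemma transpose_mult_vec_nth: "(transpose A *v d) $ j = inner (column j A) d"
proof -
  have "transpose A $ j = column j A"
    by (simp add: transpose_def column_def)
  then show ?thesis
    by (simp only: matrix_vector_mul_component)
qed

lemma Dmat_mult_vec_nth: "(Dmat A p *v v) $ i = Dmat A p $ i $ i * v $ i"
proof -
  have "(Dmat A p *v v) $ i = (\<Sum>j\<in>UNIV. Dmat A p $ i $ j * v $ j)"
    by (simp add: matrix_vector_mult_def)
  also have "\<dots> = (\<Sum>j\<in>UNIV. if j = i then Dmat A p $ i $ i * v $ j else 0)"
    by (intro sum.cong) (auto simp: Dmat_def)
  finally show ?thesis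
    by simp
qed

lemma matrix_vector_mult_Dmat_axis: "A *v (Dmat A p *v axis j 1) = Dmat A p $ j $ j *\<^sub>R column j A"
proof -
  have "Dmat A p *v axis j 1 = axis j (Dmat A p $ j $ j)"
    by (simp add: vec_eq_iff Dmat_mult_vec_nth axis_def)
  then show ?thesis
    by (simp add: matrix_vector_mult_axis)
qed

lemma Dmat_transpose_mult_nth:
  "(Dmat A p *v (transpose A *v d)) $ j = inner (A *v (Dmat A p *v axis j 1)) d"
  by (simp only: Dmat_mult_vec_nth transpose_mult_vec_nth matrix_vector_mult_Dmat_axis inner_scaleR_left)

lemma sum_Dmat_generators:
  "(\<Sum>j\<in>E. v $ j *\<^sub>R (A *v (Dmat A p *v axis j 1))) = (\<Sum>j\<in>E. (Dmat A p $ j $ j * v $ j) *\<^sub>R column j A)"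
  by (simp only: matrix_vector_mult_Dmat_axis scaleR_scaleR mult.commute)

lemma matrix_vector_mult_Dmat_supported:
  assumes "\<forall>j. j \<notin> E \<longrightarrow> v $ j = 0"
  shows "A *v (Dmat A p *v v) = (\<Sum>j\<in>E. v $ j *\<^sub>R (A *v (Dmat A p *v axis j 1)))"
proof -
  have "A *v (Dmat A p *v v) = (\<Sum>j\<in>UNIV. (Dmat A p *v v) $ j *\<^sub>R column j A)"
    by (simp only: matrix_mult_sum scalar_mult_eq_scaleR)
  also have "\<dots> = (\<Sum>j\<in>UNIV. (Dmat A p $ j $ j * v $ j) *\<^sub>R column j A)"
    by (simp only: Dmat_mult_vec_nth)
  also have "\<dots> = (\<Sum>j\<in>E. (Dmat A p $ j $ j * v $ j) *\<^sub>R column j A)"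
    by (rule sum.mono_neutral_right) (use assms in auto)
  finally show ?thesis
    by (simp only: sum_Dmat_generators)
qed

lemma convex_cone_equicorr_cone: "convex_cone (equicorr_cone A p)"
  by (simp add: equicorr_cone_def convex_cone_convex_cone_hull)

lemma convex_equicorr_cone: "convex (equicorr_cone A p)"
  by (simp add: equicorr_cone_def convex_convex_cone_hull)

lemma closed_equicorr_cone: "closed (equicorr_cone A p)"
  by (simp add: equicorr_cone_def closed_convex_cone_hull)

lemma equicorr_cone_eq_nnls_image:
  "equicorr_cone A p = {A *v (Dmat A p *v v) | v.
     (\<forall>j\<in>equicorr A p. 0 \<le> v $ j) \<and> (\<forall>j. j \<notin> equicorr A p \<longrightarrow> v $ j = 0)}"
proof -
  let ?E = "equicorr A p" and ?a = "\<lambda>j. A *v (Dmat A p *v axis j 1)"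
  have "{\<Sum>j\<in>?E. u j *\<^sub>R ?a j | u. \<forall>j\<in>?E. 0 \<le> u j} = {A *v (Dmat A p *v v) | v.
     (\<forall>j\<in>?E. 0 \<le> v $ j) \<and> (\<forall>j. j \<notin> ?E \<longrightarrow> v $ j = 0)}" (is "?C = ?N")
  proof
    show "?C \<subseteq> ?N"
    proof
      fix x assume "x \<in> ?C"
      then obtain u where x: "x = (\<Sum>j\<in>?E. u j *\<^sub>R ?a j)" and u: "\<forall>j\<in>?E. 0 \<le> u j"
        by blast
      define v where "v = (\<chi> j. if j \<in> ?E then u j else 0)"
      have v: "\<forall>j\<in>?E. 0 \<le> v $ j" "\<forall>j. j \<notin> ?E \<longrightarrow> v $ j = 0"
        using u by (simp_all add: v_def)
      have "A *v (Dmat A p *v v) = x"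
        unfolding matrix_vector_mult_Dmat_supported[OF v(2)] x by (intro sum.cong) (simp_all add: v_def)
      with v show "x \<in> ?N"
        by blast
    qed
    show "?N \<subseteq> ?C"
    proof
      fix x assume "x \<in> ?N"
      then obtain v where "x = A *v (Dmat A p *v v)"
        and "\<forall>j\<in>?E. 0 \<le> v $ j" "\<forall>j. j \<notin> ?E \<longrightarrow> v $ j = 0"
        by blast
      then show "x \<in> ?C"
        using matrix_vector_mult_Dmat_supported[of ?E v A p] by blast
    qed
  qed
  then show ?thesis
    by (simp add: equicorr_cone_def convex_cone_hull_finite_image)
qed

lemma equicorr_cone_dual:
  "(\<forall>x\<in>equicorr_cone A p. 0 \<le> inner x d) \<longleftrightarrow>
     (\<forall>j\<in>equicorr A p. 0 \<le> (Dmat A p *v (transpose A *v d)) $ j)"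
  unfolding equicorr_cone_def convex_cone_hull_dual Dmat_transpose_mult_nth by simp

lemma subdiffV_eq_equicorr_cone:
  "subdiffV A p t b = (\<lambda>x. (b + t *\<^sub>R p) - x) ` equicorr_cone A p"
proof -
  have "(\<lambda>x. (b + t *\<^sub>R p) - x) ` {\<Sum>j\<in>equicorr A p. u j *\<^sub>R (A *v (Dmat A p *v axis j 1)) | u.
      \<forall>j\<in>equicorr A p. 0 \<le> u j} = {(b + t *\<^sub>R p) - (\<Sum>j\<in>equicorr A p. u j *\<^sub>R (A *v (Dmat A p *v axis j 1))) | u.
      \<forall>j\<in>equicorr A p. 0 \<le> u j}"
    by blast
  then show ?thesis
    by (simp add: subdiffV_def equicorr_cone_def convex_cone_hull_finite_image add.commute)
qed

lemma dir_eq_closest_point: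
  "dir A p t b = closest_point (equicorr_cone A p) (b + t *\<^sub>R p) - (b + t *\<^sub>R p)"
  unfolding dir_def subdiffV_eq_equicorr_cone
  by (simp add: closest_point_reflection[OF convex_equicorr_cone closed_equicorr_cone
        convex_cone_nonempty[OF convex_cone_equicorr_cone]])

lemma nnls_solution_eq_closest_point:
  assumes "\<forall>j\<in>equicorr A p. 0 \<le> u $ j" "\<forall>j. j \<notin> equicorr A p \<longrightarrow> u $ j = 0"
    and "\<forall>v. (\<forall>j\<in>equicorr A p. 0 \<le> v $ j) \<and> (\<forall>j. j \<notin> equicorr A p \<longrightarrow> v $ j = 0) \<longrightarrow>
           (norm (A *v (Dmat A p *v u) - c))\<^sup>2 \<le> (norm (A *v (Dmat A p *v v) - c))\<^sup>2"
  shows "A *v (Dmat A p *v u) = closest_point (equicorr_cone A p) c"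
proof (rule closest_point_unique)
  show "A *v (Dmat A p *v u) \<in> equicorr_cone A p"
    unfolding equicorr_cone_eq_nnls_image using assms(1,2) by blast
  show "\<forall>x\<in>equicorr_cone A p. dist c (A *v (Dmat A p *v u)) \<le> dist c x"
    unfolding equicorr_cone_eq_nnls_image using assms(3) by (auto simp: dist_norm norm_minus_commute[of c])
qed (rule convex_equicorr_cone closed_equicorr_cone)+

lemma nnls_complementary:
  assumes "A *v (Dmat A p *v u) = closest_point (equicorr_cone A p) c"
    and "\<forall>j\<in>equicorr A p. 0 \<le> u $ j" "\<forall>j. j \<notin> equicorr A p \<longrightarrow> u $ j = 0"
  shows "u $ j * (Dmat A p *v (transpose A *v (closest_point (equicorr_cone A p) c - c))) $ j = 0"
proof (cases "j \<in> equicorr A p")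
  case True
  show ?thesis
    unfolding Dmat_transpose_mult_nth equicorr_cone_def
    using assms True matrix_vector_mult_Dmat_supported[OF assms(3), of A p]
    by (intro closest_point_convex_cone_hull_complementary) (simp_all add: equicorr_cone_def)
qed (use assms(3) in simp)

lemma dir_cone_projection:
  "(\<forall>j\<in>equicorr A p. 0 \<le> (Dmat A p *v (transpose A *v d)) $ j)
    \<and> (\<forall>d'. (\<forall>j\<in>equicorr A p. 0 \<le> (Dmat A p *v (transpose A *v d')) $ j) \<longrightarrow>
         (norm (d + (b + t *\<^sub>R p)))\<^sup>2 \<le> (norm (d' + (b + t *\<^sub>R p)))\<^sup>2)
   \<longleftrightarrow> d = dir A p t b"
  using dual_cone_projection[OF convex_cone_equicorr_cone[of A p] closed_equicorr_cone[of A p],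
      where c = "b + t *\<^sub>R p" and d = d]
  by (simp add: equicorr_cone_dual dir_eq_closest_point)

lemma dir_norm_identity: "(norm (dir A p t b))\<^sup>2 + inner (b + t *\<^sub>R p) (dir A p t b) = 0"
  using closest_point_convex_cone_polar(1)[OF convex_cone_equicorr_cone[of A p] closed_equicorr_cone[of A p],
      of "b + t *\<^sub>R p"]
  by (simp add: dir_eq_closest_point power2_norm_eq_inner inner_diff_left inner_diff_right inner_commute)

lemma nnls_dir:
  assumes "\<forall>j\<in>equicorr A p. 0 \<le> u $ j" "\<forall>j. j \<notin> equicorr A p \<longrightarrow> u $ j = 0"
    and "\<forall>v. (\<forall>j\<in>equicorr A p. 0 \<le> v $ j) \<and> (\<forall>j. j \<notin> equicorr A p \<longrightarrow> v $ j = 0) \<longrightarrow>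
           (norm (A *v (Dmat A p *v u) - (b + t *\<^sub>R p)))\<^sup>2
             \<le> (norm (A *v (Dmat A p *v v) - (b + t *\<^sub>R p)))\<^sup>2"
  shows "dir A p t b = (\<Sum>j\<in>equicorr A p. (Dmat A p $ j $ j * u $ j) *\<^sub>R column j A) - (b + t *\<^sub>R p)"
    and "u $ j * (Dmat A p *v (transpose A *v dir A p t b)) $ j = 0"
proof -
  have solution: "A *v (Dmat A p *v u) = closest_point (equicorr_cone A p) (b + t *\<^sub>R p)"
    using nnls_solution_eq_closest_point[OF assms] .
  then show "dir A p t b = (\<Sum>j\<in>equicorr A p. (Dmat A p $ j $ j * u $ j) *\<^sub>R column j A) - (b + t *\<^sub>R p)"
    by (simp add: dir_eq_closest_point matrix_vector_mult_Dmat_supported[OF assms(2)] sum_Dmat_generators)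
  show "u $ j * (Dmat A p *v (transpose A *v dir A p t b)) $ j = 0"
    unfolding dir_eq_closest_point using nnls_complementary[OF solution assms(1,2)] .
qed

theorem lemma3p3:
  fixes A :: "real^'n^'m" and b p0 :: "real^'m" and t :: real
  assumes "CARD('m) \<le> CARD('n)"
    and "rank A = CARD('m)"
    and "b \<noteq> 0"
    and "t \<ge> 0"
    and "p0 \<in> domV A"
  shows
    "(\<forall>d. ((\<forall>j\<in>equicorr A p0. (Dmat A p0 *v (transpose A *v d))$j \<ge> 0)
            \<and> (\<forall>d'. (\<forall>j\<in>equicorr A p0. (Dmat A p0 *v (transpose A *v d'))$j \<ge> 0) \<longrightarrow>
                   (norm (d + (b + t *\<^sub>R p0)))^2 \<le> (norm (d' + (b + t *\<^sub>R p0)))^2))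
          \<longleftrightarrow> d = dir A p0 t b)
     \<and> (\<forall>u. ((\<forall>j\<in>equicorr A p0. u$j \<ge> 0) \<and> (\<forall>j. j \<notin> equicorr A p0 \<longrightarrow> u$j = 0)
             \<and> (\<forall>v. (\<forall>j\<in>equicorr A p0. v$j \<ge> 0) \<and> (\<forall>j. j \<notin> equicorr A p0 \<longrightarrow> v$j = 0) \<longrightarrow>
                 (norm (A *v (Dmat A p0 *v u) - (b + t *\<^sub>R p0)))^2
                   \<le> (norm (A *v (Dmat A p0 *v v) - (b + t *\<^sub>R p0)))^2))
          \<longrightarrow> dir A p0 t b = (\<Sum>j\<in>equicorr A p0. (Dmat A p0 $ j $ j * u$j) *\<^sub>R column j A) - (b + t *\<^sub>R p0)
              \<and> (\<forall>j. u$j * (Dmat A p0 *v (transpose A *v dir A p0 t b))$j = 0)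
              \<and> (norm (dir A p0 t b))^2 + inner (b + t *\<^sub>R p0) (dir A p0 t b) = 0)"
  by (intro conjI allI impI dir_cone_projection dir_norm_identity; elim conjE)
     (rule nnls_dir; assumption)+

end
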